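(* Let $\Gamma$ be a countable discrete group and $\mu$ a probability measure on $\Gamma$ with $\mu(e)>0$. If $0\neq T\in\mathcal B(\ell^2(\Gamma))$ and $\lambda\in\mathbb T$ satisfy $\mathcal P_\mu(T)=\lambda T$, then $\lambda=1$.
   Context: $\rho$ denotes the right regular representation of $\Gamma$ on $\ell^2(\Gamma)$, $\rho_g\delta_x=\delta_{xg^{-1}}$. The Markov operator $\mathcal P_\mu:\mathcal B(\ell^2(\Gamma))\to\mathcal B(\ell^2(\Gamma))$ is $\mathcal P_\mu(T)=\sum_{g\in\Gamma}\mu(g)\rho_gT\rho_g^*$. *)

theory Defs
  imports "HOL-Analysis.Analysis"
begin

text \<open>The group \<Gamma> is a type of class group_add (written additively, not necessarily
  commutative; identity 0) and countable.\<close>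

definition ell2 :: "('g \<Rightarrow> complex) set" where
  "ell2 = {f. (\<lambda>x. (cmod (f x))\<^sup>2) summable_on UNIV}"

definition ell2_norm :: "('g \<Rightarrow> complex) \<Rightarrow> real" where
  "ell2_norm f = sqrt (\<Sum>\<^sub>\<infinity>x. (cmod (f x))\<^sup>2)"

definition bounded_op :: "(('g \<Rightarrow> complex) \<Rightarrow> ('g \<Rightarrow> complex)) \<Rightarrow> bool" where
  "bounded_op T \<longleftrightarrow>
     (\<forall>f\<in>ell2. T f \<in> ell2) \<and>
     (\<forall>f\<in>ell2. \<forall>h\<in>ell2. \<forall>a::complex. T (\<lambda>x. a * f x + h x) = (\<lambda>x. a * T f x + T h x)) \<and>
     (\<exists>K. \<forall>f\<in>ell2. ell2_norm (T f) \<le> K * ell2_norm f)"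

text \<open>Right regular representation: (\<rho>_g f)(x) = f(x g), so \<rho>_g \<delta>_x = \<delta>_{x g^{-1}};
  its adjoint is \<rho>_{g^{-1}}.\<close>

definition rho :: "'g::group_add \<Rightarrow> ('g \<Rightarrow> complex) \<Rightarrow> ('g \<Rightarrow> complex)" where
  "rho g f = (\<lambda>x. f (x + g))"

text \<open>Markov operator P_\<mu>(T) = \<Sum>_g \<mu>(g) \<rho>_g T \<rho>_g^*, the sum taken in the strong operator
  topology (evaluated pointwise, which agrees with the l2-limit).\<close>

definition markov_op :: "('g::group_add \<Rightarrow> real) \<Rightarrow> (('g \<Rightarrow> complex) \<Rightarrow> ('g \<Rightarrow> complex))
    \<Rightarrow> ('g \<Rightarrow> complex) \<Rightarrow> ('g \<Rightarrow> complex)" where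
  "markov_op \<mu> T f = (\<lambda>x. \<Sum>\<^sub>\<infinity>g. complex_of_real (\<mu> g) * rho g (T (rho (- g) f)) x)"

end

theory Submission
  imports Defs
begin

text \<open>Let \<open>M\<close> be the supremum of \<open>|(T f)(x)|\<close> over all \<open>x\<close> and all \<open>f\<close> in the unit ball
  of \<open>\<ell>\<^sup>2(\<Gamma>)\<close>; it is finite since \<open>T\<close> is bounded and positive since \<open>T \<noteq> 0\<close>. Since each \<open>\<rho>\<^sub>g\<close>
  is an isometry, every term of \<open>\<P>\<^sub>\<mu>(T) f (x)\<close> is bounded by \<open>\<mu>(g) M\<close>. Separating the term \<open>g = e\<close>,
  which is \<open>\<mu>(e) (T f)(x)\<close>, the eigenvalue equation gives
  \<open>|\<lambda> - \<mu>(e)| |(T f)(x)| \<le> (1 - \<mu>(e)) M\<close>, hence \<open>|\<lambda> - \<mu>(e)| \<le> 1 - \<mu>(e)\<close>.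
  So \<open>\<lambda>\<close> lies in the closed disc of radius \<open>1 - \<mu>(e)\<close> around \<open>\<mu>(e) > 0\<close>, which meets the unit
  circle only at \<open>1\<close>.\<close>

lemma ell2_norm_nonneg: "ell2_norm f \<ge> 0"
  by (simp add: ell2_norm_def infsum_nonneg)

lemma norm_le_ell2_norm:
  assumes "f \<in> ell2"
  shows "cmod (f x) \<le> ell2_norm f"
proof -
  have "(\<Sum>\<^sub>\<infinity>y\<in>{x}. (cmod (f y))\<^sup>2) \<le> (\<Sum>\<^sub>\<infinity>y. (cmod (f y))\<^sup>2)"
    using assms by (intro infsum_mono2) (auto simp: ell2_def)
  then show ?thesis
    by (simp add: ell2_norm_def real_le_rsqrt)
qed

lemma ell2_norm_eq_0_imp_zero:
  assumes "f \<in> ell2" "ell2_norm f = 0"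
  shows "f = (\<lambda>_. 0)"
  using norm_le_ell2_norm[OF assms(1)] assms(2) by fastforce

lemma scale_in_ell2:
  assumes "f \<in> ell2"
  shows "(\<lambda>x. c * f x) \<in> ell2"
  using summable_on_cmult_right[of "\<lambda>x. (cmod (f x))\<^sup>2" UNIV "(cmod c)\<^sup>2"] assms
  by (simp add: ell2_def norm_mult power_mult_distrib)

lemma ell2_norm_scale:
  assumes "f \<in> ell2"
  shows "ell2_norm (\<lambda>x. c * f x) = cmod c * ell2_norm f"
proof -
  have "(\<Sum>\<^sub>\<infinity>x. (cmod (c * f x))\<^sup>2) = (cmod c)\<^sup>2 * (\<Sum>\<^sub>\<infinity>x. (cmod (f x))\<^sup>2)"
    using infsum_cmult_right[of "(cmod c)\<^sup>2" "\<lambda>x. (cmod (f x))\<^sup>2" UNIV] assms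
    by (simp add: ell2_def norm_mult power_mult_distrib)
  then show ?thesis
    by (simp add: ell2_norm_def real_sqrt_mult)
qed

lemma rho_in_ell2:
  assumes "f \<in> ell2"
  shows "rho g f \<in> ell2"
  using summable_on_reindex_bij_betw[OF bij_plus_right, of "\<lambda>x. (cmod (f x))\<^sup>2" g] assms
  by (simp add: ell2_def rho_def)

lemma ell2_norm_rho: "ell2_norm (rho g f) = ell2_norm f"
  using infsum_reindex_bij_betw[OF bij_plus_right, of "\<lambda>x. (cmod (f x))\<^sup>2" g]
  by (simp add: ell2_norm_def rho_def)

lemma bounded_op_zero:
  assumes "bounded_op T"
  shows "T (\<lambda>_. 0) = (\<lambda>_. 0)"
proof -
  have zero: "(\<lambda>_. 0) \<in> ell2" by (simp add: ell2_def)
  have "\<forall>f\<in>ell2. \<forall>h\<in>ell2. \<forall>a. T (\<lambda>x. a * f x + h x) = (\<lambda>x. a * T f x + T h x)"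
    using assms by (simp add: bounded_op_def)
  from this[rule_format, OF zero zero, of 1]
  have "T (\<lambda>_. 0) x = T (\<lambda>_. 0) x + T (\<lambda>_. 0) x" for x
    by (metis add_0 mult_1)
  then show ?thesis by auto
qed

lemma bounded_op_scale:
  assumes "bounded_op T" "f \<in> ell2"
  shows "T (\<lambda>x. c * f x) = (\<lambda>x. c * T f x)"
proof -
  have "(\<lambda>_. 0) \<in> ell2" by (simp add: ell2_def)
  then show ?thesis
    using assms bounded_op_zero[OF assms(1)] unfolding bounded_op_def by force
qed

text \<open>The supremum of the coefficients \<open>|\<langle>T f, \<delta>\<^sub>x\<rangle>|\<close>, \<open>\<parallel>f\<parallel> \<le> 1\<close>, is used in place of \<open>\<parallel>T\<parallel>\<close>:
  it bounds each term of \<open>\<P>\<^sub>\<mu>(T) f (x)\<close> directly.\<close>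

definition coeff_bound :: "(('g \<Rightarrow> complex) \<Rightarrow> ('g \<Rightarrow> complex)) \<Rightarrow> real" where
  "coeff_bound T = Sup {cmod (T f x) | f x. f \<in> ell2 \<and> ell2_norm f \<le> 1}"

lemma bdd_above_coeffs:
  assumes "bounded_op T"
  shows "bdd_above {cmod (T f x) | f x. f \<in> ell2 \<and> ell2_norm f \<le> 1}"
proof -
  obtain K where K: "\<And>f. f \<in> ell2 \<Longrightarrow> ell2_norm (T f) \<le> K * ell2_norm f"
    using assms unfolding bounded_op_def by blast
  have "cmod (T f x) \<le> max K 0" if "f \<in> ell2" "ell2_norm f \<le> 1" for f x
  proof -
    have "cmod (T f x) \<le> K * ell2_norm f"
      using norm_le_ell2_norm K that assms unfolding bounded_op_def by (meson order.trans)
    also have "\<dots> \<le> max K 0 * ell2_norm f"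
      by (simp add: ell2_norm_nonneg mult_right_mono)
    also have "\<dots> \<le> max K 0"
      using that(2) by (simp add: mult_left_le)
    finally show ?thesis .
  qed
  then show ?thesis
    by (intro bdd_aboveI[where M = "max K 0"]) blast
qed

lemma norm_le_coeff_bound:
  assumes "bounded_op T" "f \<in> ell2" "ell2_norm f \<le> 1"
  shows "cmod (T f x) \<le> coeff_bound T"
  unfolding coeff_bound_def using assms by (intro cSup_upper bdd_above_coeffs) auto

lemma coeff_bound_pos:
  assumes "bounded_op T" "f \<in> ell2" "T f \<noteq> (\<lambda>_. 0)"
  shows "coeff_bound T > 0"
proof -
  obtain x where x: "T f x \<noteq> 0" using assms(3) by auto
  have "ell2_norm f \<noteq> 0"
    using ell2_norm_eq_0_imp_zero[OF assms(2)] assms(3) bounded_op_zero[OF assms(1)] by auto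
  then have norm_pos: "ell2_norm f > 0"
    using ell2_norm_nonneg[of f] by linarith
  define c where "c = complex_of_real (1 / ell2_norm f)"
  have "ell2_norm (\<lambda>y. c * f y) = cmod c * ell2_norm f"
    by (rule ell2_norm_scale[OF assms(2)])
  also have "\<dots> = 1"
    using norm_pos by (simp add: c_def norm_divide)
  finally have "ell2_norm (\<lambda>y. c * f y) = 1" .
  then have "cmod (T (\<lambda>y. c * f y) x) \<le> coeff_bound T"
    by (intro norm_le_coeff_bound assms(1) scale_in_ell2 assms(2)) simp
  moreover have "cmod (T (\<lambda>y. c * f y) x) > 0"
    unfolding bounded_op_scale[OF assms(1,2)] using x norm_pos by (simp add: c_def)
  ultimately show ?thesis by linarith
qed

lemma mult_coeff_bound_le:
  assumes "bounded_op T" "c \<ge> 0"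
    and bound: "\<And>f x. f \<in> ell2 \<Longrightarrow> ell2_norm f \<le> 1 \<Longrightarrow> c * cmod (T f x) \<le> B"
  shows "c * coeff_bound T \<le> B"
proof -
  have zero: "(\<lambda>_. 0) \<in> ell2" "ell2_norm (\<lambda>_::'a. 0::complex) \<le> 1"
    by (simp_all add: ell2_def ell2_norm_def)
  show ?thesis
  proof (cases "c = 0")
    case True
    then show ?thesis using bound[OF zero] by simp
  next
    case False
    then have "coeff_bound T \<le> B / c"
      unfolding coeff_bound_def using zero assms(2)
      by (intro cSup_least) (auto simp: pos_le_divide_eq mult.commute intro: bound)
    then show ?thesis
      using False assms(2) by (simp add: pos_le_divide_eq mult.commute)
  qed
qed

lemma has_sum_Diff_singleton:
  fixes f :: "'a \<Rightarrow> 'b::{topological_ab_group_add, t2_space, uniform_topological_group_add,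
    complete_uniform_space}"
  assumes "(f has_sum s) A" "a \<in> A"
  shows "(f has_sum (s - f a)) (A - {a})"
proof -
  have "f summable_on (A - {a})"
    using assms(1) summable_on_subset has_sum_imp_summable by blast
  then obtain s' where s': "(f has_sum s') (A - {a})"
    unfolding summable_on_def by blast
  then have "(f has_sum (f a + s')) A"
    using has_sum_insert[of a "A - {a}"] assms(2) by (simp add: insert_absorb)
  then have "s = f a + s'"
    using assms(1) has_sum_unique by blast
  then show ?thesis using s' by simp
qed

lemma markov_op_minus_diagonal_bound:
  fixes \<mu> :: "'g::group_add \<Rightarrow> real" and T :: "('g \<Rightarrow> complex) \<Rightarrow> ('g \<Rightarrow> complex)"
  assumes nonneg: "\<And>g. \<mu> g \<ge> 0" and prob: "(\<mu> has_sum 1) UNIV"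
    and T_bound: "\<And>h y. h \<in> ell2 \<Longrightarrow> ell2_norm h \<le> 1 \<Longrightarrow> cmod (T h y) \<le> M"
    and f: "f \<in> ell2" "ell2_norm f \<le> 1"
  shows "cmod (markov_op \<mu> T f x - \<mu> 0 * T f x) \<le> (1 - \<mu> 0) * M"
proof -
  define a where "a = (\<lambda>g. complex_of_real (\<mu> g) * rho g (T (rho (- g) f)) x)"
  have a_bound: "cmod (a g) \<le> \<mu> g * M" for g
  proof -
    have "cmod (T (rho (- g) f) (x + g)) \<le> M"
      using T_bound rho_in_ell2[OF f(1)] f(2) by (simp add: ell2_norm_rho)
    then show ?thesis
      unfolding a_def rho_def using nonneg[of g] by (simp add: norm_mult mult_left_mono)
  qed
  have rest: "(\<mu> has_sum (1 - \<mu> 0)) (UNIV - {0})"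
    using has_sum_Diff_singleton[OF prob] by simp
  then have rest_M: "((\<lambda>g. \<mu> g * M) has_sum ((1 - \<mu> 0) * M)) (UNIV - {0})"
    by (rule has_sum_cmult_left)
  have a_abs: "(\<lambda>g. norm (a g)) summable_on UNIV - {0}"
    using has_sum_imp_summable[OF rest_M] a_bound
    by (rule summable_on_comparison_test) simp
  then have a_summable: "a summable_on UNIV - {0}"
    by (rule abs_summable_summable)
  have "infsum a (insert 0 (UNIV - {0})) = a 0 + infsum a (UNIV - {0})"
    using a_summable by (rule infsum_insert) simp
  then have "markov_op \<mu> T f x = \<mu> 0 * T f x + infsum a (UNIV - {0})"
    by (simp add: markov_op_def a_def rho_def insert_absorb)
  then have "cmod (markov_op \<mu> T f x - \<mu> 0 * T f x) = cmod (infsum a (UNIV - {0}))"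
    by simp
  also have "\<dots> \<le> (\<Sum>\<^sub>\<infinity>g\<in>UNIV - {0}. cmod (a g))"
    using a_abs by (rule norm_infsum_bound)
  also have "\<dots> \<le> (1 - \<mu> 0) * M"
    using has_sum_infsum[OF a_abs] rest_M a_bound by (rule has_sum_mono)
  finally show ?thesis .
qed

lemma unit_complex_eq_1_if_dist_le:
  fixes lam :: complex and m :: real
  assumes "cmod lam = 1" "m > 0" "cmod (lam - of_real m) \<le> 1 - m"
  shows "lam = 1"
proof -
  define a b where "a = Re lam" and "b = Im lam"
  have unit: "a\<^sup>2 + b\<^sup>2 = 1"
    using assms(1) by (simp add: cmod_def a_def b_def)
  have "(cmod (lam - of_real m))\<^sup>2 \<le> (1 - m)\<^sup>2"
    using assms(3) by (intro power_mono) simp_all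
  then have "(a - m)\<^sup>2 + b\<^sup>2 \<le> (1 - m)\<^sup>2"
    by (simp add: cmod_def a_def b_def)
  then have "m \<le> m * a"
    using unit by (simp add: power2_eq_square algebra_simps)
  then have a_ge: "a \<ge> 1"
    using assms(2) by simp
  then have "a \<le> a\<^sup>2"
    by (simp add: power2_eq_square)
  then have "b\<^sup>2 \<le> 0"
    using unit a_ge by linarith
  then have "b = 0"
    by simp
  moreover have "a = 1"
    using unit a_ge \<open>a \<le> a\<^sup>2\<close> \<open>b = 0\<close> by simp
  ultimately show ?thesis
    by (simp add: complex_eq_iff a_def b_def)
qed

theorem theorem2p2:
  fixes \<mu> :: "'g::{group_add, countable} \<Rightarrow> real"
    and T :: "('g \<Rightarrow> complex) \<Rightarrow> ('g \<Rightarrow> complex)"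
    and lam :: complex
  assumes prob_nonneg: "\<And>g. \<mu> g \<ge> 0"
    and prob_sum: "(\<mu> has_sum 1) UNIV"
    and mu_e: "\<mu> 0 > 0"
    and T_bounded: "bounded_op T"
    and T_nonzero: "\<exists>f\<in>ell2. T f \<noteq> (\<lambda>_. 0)"
    and lam_circle: "cmod lam = 1"
    and eigen: "\<forall>f\<in>ell2. markov_op \<mu> T f = (\<lambda>x. lam * T f x)"
  shows "lam = 1"
proof -
  define M where "M = coeff_bound T"
  have M_pos: "M > 0"
    using T_nonzero coeff_bound_pos[OF T_bounded] by (auto simp: M_def)
  have "cmod (lam - \<mu> 0) * cmod (T f x) \<le> (1 - \<mu> 0) * M"
    if "f \<in> ell2" "ell2_norm f \<le> 1" for f x
  proof -
    have "(lam - \<mu> 0) * T f x = markov_op \<mu> T f x - \<mu> 0 * T f x"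
      using eigen that(1) by (simp add: algebra_simps)
    then show ?thesis
      using markov_op_minus_diagonal_bound[OF prob_nonneg prob_sum _ that]
        norm_le_coeff_bound[OF T_bounded] by (metis M_def norm_mult)
  qed
  then have "cmod (lam - \<mu> 0) * M \<le> (1 - \<mu> 0) * M"
    unfolding M_def by (intro mult_coeff_bound_le[OF T_bounded]) auto
  then have "cmod (lam - \<mu> 0) \<le> 1 - \<mu> 0"
    using M_pos by simp
  then show ?thesis
    using unit_complex_eq_1_if_dist_le lam_circle mu_e by blast
qed

end
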